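(* Let $k\ge1$ and $m\in\mathbb N$. If $A\subset\mathbb N$ is an SG$_k$ set, then $A\cap m\mathbb N$ is an SG$_k$ set. If $B\subset\mathbb N$ is an SG$_k^*$ set, then $B\cap m\mathbb N$ is an SG$_k^*$ set.
   Context: $\mathbb N=\{1,2,\dots\}$. For $k\ge0$, $\mathcal S_k$ is the family of finite non-empty $\alpha\subset\mathbb N$ such that for every $i\in\alpha$, either $i=\max\alpha$ or there is $j\in\alpha$ with $i<j\le i+k$. For a sequence $(n_i)$ of positive integers, $n_\alpha=\sum_{i\in\alpha}n_i$ and $\mathrm{SG}_k(n_i)=\{n_\alpha:\alpha\in\mathcal S_k\}$. A set $A\subset\mathbb N$ is SG$_k$ if $A\supseteq\mathrm{SG}_k(n_i)$ for some sequence $(n_i)$ of positive integers. A set $B\subset\mathbb N$ is SG$_k^*$ if $B\cap A\ne\emptyset$ for every SG$_k$ set $A$, equivalently if for every sequence $(n_i)$ of positive integers there is $\alpha\in\mathcal S_k$ with $n_\alpha\in B$. *)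

theory Defs
  imports Main
begin

text \<open>Positive integers are represented in nat; the paper's N = {1,2,...} is the set
  {n. n \<ge> 1}. Sequences (n_i) indexed by i \<in> N are functions nat \<Rightarrow> nat whose
  value at 0 is irrelevant.\<close>

definition S_fam :: "nat \<Rightarrow> nat set set" where
  "S_fam k = {\<alpha>. finite \<alpha> \<and> \<alpha> \<noteq> {} \<and> \<alpha> \<subseteq> {1..} \<and>
      (\<forall>i\<in>\<alpha>. i = Max \<alpha> \<or> (\<exists>j\<in>\<alpha>. i < j \<and> j \<le> i + k))}"

definition SG :: "nat \<Rightarrow> (nat \<Rightarrow> nat) \<Rightarrow> nat set" where
  "SG k n = {(\<Sum>i\<in>\<alpha>. n i) | \<alpha>. \<alpha> \<in> S_fam k}"

definition pos_seq :: "(nat \<Rightarrow> nat) \<Rightarrow> bool" where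
  "pos_seq n \<longleftrightarrow> (\<forall>i\<ge>1. n i > 0)"

definition is_SG :: "nat \<Rightarrow> nat set \<Rightarrow> bool" where
  "is_SG k A \<longleftrightarrow> A \<subseteq> {1..} \<and> (\<exists>n. pos_seq n \<and> SG k n \<subseteq> A)"

definition is_SG_star :: "nat \<Rightarrow> nat set \<Rightarrow> bool" where
  "is_SG_star k B \<longleftrightarrow> B \<subseteq> {1..} \<and> (\<forall>A. is_SG k A \<longrightarrow> B \<inter> A \<noteq> {})"

definition multiples :: "nat \<Rightarrow> nat set" where
  "multiples m = {m * j | j. j \<ge> 1}"

end

theory Submission
  imports Defs "HOL-Library.Infinite_Set"
begin

text \<open>Given a sequence \<open>n\<close>, sum it along the residue classes modulo \<open>k\<close>: let
  \<open>f x\<close> be the sum of \<open>n y\<close> over \<open>y \<le> x\<close> with \<open>y \<equiv> x (mod k)\<close>. By pigeonhole, in every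
  residue class \<open>L\<close> infinitely many \<open>x\<close> share the same value \<open>r L\<close> of \<open>f x mod m\<close>. Choose
  such points \<open>M 0 < M 1 < \<dots>\<close> with gaps larger than \<open>k\<close> and \<open>M i \<equiv> M 0 + i (mod k)\<close>.
  Then \<open>M i\<close> and \<open>M (i + k)\<close> lie in the same class, so the block of that class between them
  has an \<open>n\<close>-sum divisible by \<open>m\<close>. Different blocks are disjoint, and the union of the
  blocks indexed by an \<open>S\<^sub>k\<close> set is again an \<open>S\<^sub>k\<close> set, since consecutive elements of a
  block differ by \<open>k\<close> and the end of block \<open>i\<close> is within \<open>k\<close> of block \<open>j\<close> for
  \<open>i < j \<le> i + k\<close>. So the block sums form a new sequence whose \<open>SG\<^sub>k\<close> set lies in
  \<open>SG\<^sub>k(n) \<inter> m\<nat>\<close>; the statement about \<open>SG\<^sub>k\<^sup>*\<close> sets follows by duality.\<close>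

lemma mod_eq_less_imp_add_le:
  fixes i j k :: nat
  assumes "i mod k = j mod k" "i < j"
  shows "i + k \<le> j"
proof -
  have "k dvd j - i" using assms mod_eq_dvd_iff_nat[of i j k] by simp
  hence "k \<le> j - i" using assms(2) by (intro dvd_imp_le) auto
  thus ?thesis using assms(2) by linarith
qed

lemma ex_mod_eq_in_interval:
  fixes y c k :: nat
  assumes "0 < k"
  shows "\<exists>z. y < z \<and> z \<le> y + k \<and> z mod k = c mod k"
proof -
  define t where "t = y + k - c mod k"
  define z where "z = k * (t div k) + c mod k"
  have "c mod k < k" using assms by simp
  hence "t + c mod k = y + k" unfolding t_def by linarith
  hence "z + t mod k = y + k" unfolding z_def using mult_div_mod_eq[of k t] by linarith
  moreover have "t mod k < k" using assms by simp
  moreover have "z mod k = c mod k" unfolding z_def by simp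
  ultimately show ?thesis by (intro exI[of _ z]) auto
qed

lemma infinite_residue_class:
  fixes k L :: nat
  assumes "L < k"
  shows "infinite {x. x mod k = L}"
  unfolding infinite_nat_iff_unbounded
proof
  fix a
  have "1 * (a + 1) \<le> k * (a + 1)" using assms by (intro mult_right_mono) auto
  hence "a < L + (a + 1) * k" by (simp add: mult.commute)
  moreover have "(L + (a + 1) * k) mod k = L" using assms by (metis mod_mult_self1 mod_less)
  ultimately show "\<exists>x>a. x \<in> {x. x mod k = L}" by blast
qed

lemma infinite_fiber_mod:
  fixes f :: "nat \<Rightarrow> nat" and A :: "nat set"
  assumes "infinite A" "0 < m"
  shows "\<exists>c. infinite {x \<in> A. f x mod m = c}"
proof -
  have "finite ((\<lambda>x. f x mod m) ` A)"
    by (rule finite_subset[of _ "{..<m}"]) (use assms(2) in auto)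
  from pigeonhole_infinite[OF assms(1) this] show ?thesis by blast
qed

definition lane_sum :: "(nat \<Rightarrow> nat) \<Rightarrow> nat \<Rightarrow> nat \<Rightarrow> nat" where
  "lane_sum n k x = (\<Sum>y | 1 \<le> y \<and> y \<le> x \<and> y mod k = x mod k. n y)"

lemma lane_sum_split:
  assumes "a \<le> b" "a mod k = b mod k"
  shows "lane_sum n k b = lane_sum n k a + (\<Sum>y | a < y \<and> y \<le> b \<and> y mod k = a mod k. n y)"
proof -
  have "{y. 1 \<le> y \<and> y \<le> b \<and> y mod k = b mod k} =
      {y. 1 \<le> y \<and> y \<le> a \<and> y mod k = a mod k} \<union> {y. a < y \<and> y \<le> b \<and> y mod k = a mod k}"
    using assms by auto
  moreover have "finite {y. 1 \<le> y \<and> y \<le> a \<and> y mod k = a mod k}"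
    by (rule finite_subset[of _ "{..a}"]) auto
  moreover have "finite {y. a < y \<and> y \<le> b \<and> y mod k = a mod k}"
    by (rule finite_subset[of _ "{..b}"]) auto
  ultimately show ?thesis
    unfolding lane_sum_def by (simp add: sum.union_disjoint disjoint_iff)
qed

locale lane_walk =
  fixes k :: nat and M :: "nat \<Rightarrow> nat"
  assumes k_pos: "0 < k"
    and step_gap: "M i + k < M (Suc i)"
    and step_mod: "M (Suc i) mod k = Suc (M i) mod k"
begin

lemma gap_less: "i < j \<Longrightarrow> M i + k < M j"
proof (induction j)
  case (Suc j)
  then show ?case using step_gap[of i] step_gap[of j] by (cases "i = j") auto
qed simp

lemma mono: "i \<le> j \<Longrightarrow> M i \<le> M j"
  using gap_less[of i j] by (cases "i = j") auto

lemma mod_shift: "M i mod k = (M 0 + i) mod k"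
  by (induction i) (simp, metis step_mod mod_Suc_eq add_Suc_right)

lemma mod_add_period: "M (i + k) mod k = M i mod k"
  using mod_shift[of "i + k"] mod_shift[of i] by (simp add: add.assoc[symmetric])

definition block :: "nat \<Rightarrow> nat set" where
  "block i = {y. M i < y \<and> y \<le> M (i + k) \<and> y mod k = M i mod k}"

lemma finite_block: "finite (block i)"
  unfolding block_def by (rule finite_subset[of _ "{..M (i + k)}"]) auto

lemma end_in_block: "M (i + k) \<in> block i"
  unfolding block_def using gap_less[of i "i + k"] k_pos mod_add_period by auto

lemma block_le_end: "y \<in> block i \<Longrightarrow> y \<le> M (i + k)"
  unfolding block_def by simp

lemma block_pos: "y \<in> block i \<Longrightarrow> 1 \<le> y"
  unfolding block_def by auto

lemma block_disjoint:
  assumes "i < j"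
  shows "block i \<inter> block j = {}"
proof (rule ccontr)
  assume "block i \<inter> block j \<noteq> {}"
  then obtain y where y: "y \<in> block i" "y \<in> block j" by blast
  hence "(M 0 + i) mod k = (M 0 + j) mod k"
    unfolding block_def by (simp add: mod_shift)
  hence "i + k \<le> j"
    using mod_eq_less_imp_add_le[OF _ assms] by (simp add: nat_mod_eq_iff)
  hence "M (i + k) \<le> M j" by (rule mono)
  with y show False unfolding block_def by auto
qed

lemma block_succ:
  assumes "y \<in> block i" "y < M (i + k)"
  shows "y + k \<in> block i"
proof -
  have "y mod k = M (i + k) mod k" using assms(1) mod_add_period unfolding block_def by simp
  hence "y + k \<le> M (i + k)" using mod_eq_less_imp_add_le assms(2) by blast
  with assms(1) show ?thesis unfolding block_def by auto
qed

text \<open>Block \<open>j\<close> contains its whole residue class between \<open>M j \<le> M (i + k)\<close> and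
  \<open>M (j + k) > M (i + k) + k\<close>.\<close>

lemma block_bridge:
  assumes "i < j" "j \<le> i + k"
  shows "\<exists>z\<in>block j. M (i + k) < z \<and> z \<le> M (i + k) + k"
proof -
  obtain z where z: "M (i + k) < z" "z \<le> M (i + k) + k" "z mod k = M j mod k"
    using ex_mod_eq_in_interval[OF k_pos] by blast
  have "M j \<le> M (i + k)" using assms(2) by (rule mono)
  moreover have "M (i + k) + k < M (j + k)" using assms(1) by (intro gap_less) simp
  ultimately have "z \<in> block j" using z unfolding block_def by auto
  with z show ?thesis by blast
qed

lemma Max_Union_block:
  assumes "finite \<alpha>" "\<alpha> \<noteq> {}"
  shows "Max (\<Union> (block ` \<alpha>)) = M (Max \<alpha> + k)"
proof (rule Max_eqI)
  show "finite (\<Union> (block ` \<alpha>))" using assms(1) finite_block by blast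
  show "M (Max \<alpha> + k) \<in> \<Union> (block ` \<alpha>)" using end_in_block Max_in[OF assms] by blast
  fix y assume "y \<in> \<Union> (block ` \<alpha>)"
  then obtain i where "i \<in> \<alpha>" "y \<le> M (i + k)" using block_le_end by blast
  with assms(1) show "y \<le> M (Max \<alpha> + k)" using mono[of "i + k" "Max \<alpha> + k"] by simp
qed

lemma Union_block_in_S_fam:
  assumes \<alpha>: "\<alpha> \<in> S_fam k"
  shows "\<Union> (block ` \<alpha>) \<in> S_fam k"
proof -
  have fin: "finite \<alpha>" "\<alpha> \<noteq> {}" using \<alpha> unfolding S_fam_def by auto
  let ?U = "\<Union> (block ` \<alpha>)"
  have "y = Max ?U \<or> (\<exists>z\<in>?U. y < z \<and> z \<le> y + k)" if "i \<in> \<alpha>" "y \<in> block i" for i y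
  proof (cases "y < M (i + k)")
    case True
    with that show ?thesis using block_succ k_pos by fastforce
  next
    case False
    hence y: "y = M (i + k)" using that(2) block_le_end by (simp add: le_antisym)
    show ?thesis
    proof (cases "i = Max \<alpha>")
      case True
      with y show ?thesis using Max_Union_block[OF fin] by simp
    next
      case False
      with \<alpha> that(1) obtain j where "j \<in> \<alpha>" "i < j" "j \<le> i + k" unfolding S_fam_def by blast
      with y show ?thesis using block_bridge by blast
    qed
  qed
  moreover have "finite ?U" using fin(1) finite_block by blast
  moreover have "?U \<noteq> {}" using fin(2) end_in_block by blast
  moreover have "?U \<subseteq> {1..}" using block_pos by auto
  ultimately show ?thesis unfolding S_fam_def by blast
qed

lemma SG_block_sums_subset: "SG k (\<lambda>i. sum n (block i)) \<subseteq> SG k n"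
proof
  fix s assume "s \<in> SG k (\<lambda>i. sum n (block i))"
  then obtain \<alpha> where \<alpha>: "\<alpha> \<in> S_fam k" and s: "s = (\<Sum>i\<in>\<alpha>. sum n (block i))"
    unfolding SG_def by blast
  have "finite \<alpha>" using \<alpha> unfolding S_fam_def by simp
  hence "s = sum n (\<Union> (block ` \<alpha>))"
    unfolding s using finite_block block_disjoint
    by (subst sum.UNION_disjoint) (auto simp: disjoint_iff, metis linorder_neqE_nat)
  with Union_block_in_S_fam[OF \<alpha>] show "s \<in> SG k n" unfolding SG_def by blast
qed

lemma pos_seq_block_sums:
  assumes "pos_seq n"
  shows "pos_seq (\<lambda>i. sum n (block i))"
  unfolding pos_seq_def
proof (intro allI impI)
  fix i
  have "0 < n (M (i + k))" using assms end_in_block block_pos unfolding pos_seq_def by blast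
  moreover have "n (M (i + k)) \<le> sum n (block i)"
    by (rule member_le_sum[OF end_in_block]) (simp_all add: finite_block)
  ultimately show "0 < sum n (block i)" by linarith
qed

lemma lane_sum_add_block: "lane_sum n k (M (i + k)) = lane_sum n k (M i) + sum n (block i)"
  unfolding block_def
  using lane_sum_split[of "M i" "M (i + k)"] mono[of i "i + k"] mod_add_period[of i] by simp

end

lemma lane_walk_exists:
  fixes G :: "nat set"
  assumes k: "0 < k" and G: "\<And>L a. L < k \<Longrightarrow> \<exists>x\<in>G. x mod k = L \<and> a < x"
  shows "\<exists>M. lane_walk k M \<and> range M \<subseteq> G"
proof -
  define step where "step a = (SOME x. x \<in> G \<and> x mod k = Suc a mod k \<and> a + k < x)" for a
  have step: "step a \<in> G \<and> step a mod k = Suc a mod k \<and> a + k < step a" for a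
  proof -
    have "\<exists>x. x \<in> G \<and> x mod k = Suc a mod k \<and> a + k < x"
      using G[of "Suc a mod k" "a + k"] k by auto
    then show ?thesis unfolding step_def by (rule someI_ex)
  qed
  obtain x0 where x0: "x0 \<in> G" using G[OF k] by blast
  define M where "M = rec_nat x0 (\<lambda>_. step)"
  have M_Suc: "M (Suc i) = step (M i)" for i unfolding M_def by simp
  have "lane_walk k M"
    using k step by unfold_locales (simp_all add: M_Suc)
  moreover have "M i \<in> G" for i
    using step x0 by (cases i) (simp_all add: M_def)
  ultimately show ?thesis by blast
qed

lemma ex_lane_walk_periodic_mod:
  fixes f :: "nat \<Rightarrow> nat"
  assumes k: "0 < k" and m: "0 < m"
  shows "\<exists>M. lane_walk k M \<and> (\<forall>i. f (M (i + k)) mod m = f (M i) mod m)"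
proof -
  have "\<exists>c. infinite {x. x mod k = L \<and> f x mod m = c}" if "L < k" for L
    using infinite_fiber_mod[OF infinite_residue_class[OF that], of m f] m by simp
  hence "\<forall>L. \<exists>c. L < k \<longrightarrow> infinite {x. x mod k = L \<and> f x mod m = c}" by blast
  from choice[OF this] obtain r
    where r: "\<And>L. L < k \<Longrightarrow> infinite {x. x mod k = L \<and> f x mod m = r L}"
    by blast
  define G where "G = {x. f x mod m = r (x mod k)}"
  have "\<exists>x\<in>G. x mod k = L \<and> a < x" if "L < k" for L a
    using r[OF that] unfolding infinite_nat_iff_unbounded G_def by auto
  then obtain M where walk: "lane_walk k M" and MG: "range M \<subseteq> G"
    using lane_walk_exists k by blast
  have "f (M (i + k)) mod m = f (M i) mod m" for i
  proof -
    have "M i \<in> G" "M (i + k) \<in> G" using MG by auto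
    thus ?thesis unfolding G_def by (simp add: lane_walk.mod_add_period[OF walk])
  qed
  with walk show ?thesis by blast
qed

lemma dvd_imp_in_multiples:
  fixes s m :: nat
  assumes "m dvd s" "0 < s"
  shows "s \<in> multiples m"
proof -
  obtain j where j: "s = m * j" using assms(1) by blast
  with assms(2) have "1 \<le> j" by (cases j) auto
  with j show ?thesis unfolding multiples_def by blast
qed

lemma is_SG_Int_multiples:
  assumes k: "1 \<le> k" and m: "1 \<le> m" and A: "is_SG k A"
  shows "is_SG k (A \<inter> multiples m)"
proof -
  obtain n where n: "pos_seq n" "SG k n \<subseteq> A" and A_pos: "A \<subseteq> {1..}"
    using A unfolding is_SG_def by blast
  obtain M where walk: "lane_walk k M"
    and periodic: "\<And>i. lane_sum n k (M (i + k)) mod m = lane_sum n k (M i) mod m"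
    using ex_lane_walk_periodic_mod[of k m "lane_sum n k"] k m by auto
  interpret lane_walk k M by (rule walk)
  define n' where "n' i = sum n (block i)" for i
  have n'_dvd: "m dvd n' i" for i
    using periodic[of i] lane_sum_add_block[of n i]
      mod_eq_dvd_iff_nat[of "lane_sum n k (M i)" "lane_sum n k (M (i + k))" m]
    unfolding n'_def by simp
  have SG_A: "SG k n' \<subseteq> A" using SG_block_sums_subset n(2) unfolding n'_def by blast
  have "SG k n' \<subseteq> multiples m"
  proof
    fix s assume s: "s \<in> SG k n'"
    then obtain \<alpha> where "s = sum n' \<alpha>" unfolding SG_def by blast
    hence "m dvd s" using n'_dvd by (simp add: dvd_sum)
    moreover have "0 < s" using s SG_A A_pos by auto
    ultimately show "s \<in> multiples m" by (rule dvd_imp_in_multiples)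
  qed
  moreover have "pos_seq n'" using pos_seq_block_sums[OF n(1)] unfolding n'_def .
  ultimately show ?thesis unfolding is_SG_def using SG_A A_pos by blast
qed

lemma is_SG_star_Int_multiples:
  assumes k: "1 \<le> k" and m: "1 \<le> m" and B: "is_SG_star k B"
  shows "is_SG_star k (B \<inter> multiples m)"
  unfolding is_SG_star_def
proof (intro conjI allI impI)
  show "B \<inter> multiples m \<subseteq> {1..}" using B unfolding is_SG_star_def by blast
  fix A assume "is_SG k A"
  hence "is_SG k (A \<inter> multiples m)" using is_SG_Int_multiples k m by blast
  with B show "B \<inter> multiples m \<inter> A \<noteq> {}" unfolding is_SG_star_def by blast
qed

theorem corollary3p3:
  fixes k m :: nat and A B :: "nat set"
  assumes "k \<ge> 1" and "m \<ge> 1"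
  shows "(is_SG k A \<longrightarrow> is_SG k (A \<inter> multiples m)) \<and>
         (is_SG_star k B \<longrightarrow> is_SG_star k (B \<inter> multiples m))"
  using is_SG_Int_multiples is_SG_star_Int_multiples assms by blast

end
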